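(* In the setting described in the context, the graph $K$ has no parallel edges: no pair $\{q,q'\}$ of representatives is added to $F$ on account of two distinct source edges of $E_i$.
   Context: Let $G=(V,E)$ be a connected undirected graph on $n$ vertices with positive integer edge weights $w$ and a unique minimum spanning tree $Z$. Fix an integer $k\ge 2$, $\varepsilon>0$, $t=(2k-1)(1+\varepsilon)$, and let $H$ be the greedy spanner: starting from $H=(V,\emptyset)$, the edges of $E$ are processed in non-decreasing order of weight and $\{u,v\}$ is added to $H$ iff currently $d_H(u,v)>t\cdot w(u,v)$. Order the vertices $v_1,\dots,v_n$ by a preorder traversal of $Z$ and let $L=\sum_{j=2}^n d_Z(v_{j-1},v_j)$. Fix $i\in\{1,\dots,\lceil\log_k n\rceil\}$, set $a=k^{i-1}L/n$, and let $E_i=\{e\in E(H)\setminus E(Z): a<w(e)\le ka\}$. View $Z$ as a metric tree (each edge of weight $x$ is a segment of length $x$) and let $d_Z$ denote distance in it. Let $P=(p_0,\dots,p_L)$ be a path with unit-length edges, where $v_1=p_0$ and $v_j=p_{\ell_j}$ with $\ell_1=0$, $\ell_j=\ell_{j-1}+d_Z(v_{j-1},v_j)$; each point $p_h$ with $\ell_{j-1}\le h\le \ell_j$ is identified with the point of $Z$ on the $Z$-path from $v_{j-1}$ to $v_j$ at distance $h-\ell_{j-1}$ from $v_{j-1}$ (Steiner points subdividing edges of $Z\subseteq H$). Set $s=8L/(\varepsilon a)$, assumed (by scaling) to be such that $s$ and $L/s=\varepsilon a/8$ are integers. For $j\in[s]$ the interval $I_j$ is $\{p_{(j-1)L/s},\dots,p_{jL/s}\}$,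 and $r_j$ is an arbitrarily chosen interior point of $I_j$; $R=\{r_1,\dots,r_s\}$. For an integer $b\ge 0$, $N_b(j)=\{r_h: h\in[s], |j-h|\le b\}$. The multigraph $K=(R,F)$ is defined as follows: for each $e=\{u,v\}\in E_i$ with $u\in I_h$, $v\in I_j$, let $b=\lfloor w(e)/a\rfloor$ and let $M$ be an arbitrary maximal matching between $N_b(h)$ and $N_b(j)$; all edges of $M$ are added to $F$, and for each $\{q,q'\}\in M$ with $q\in N_b(h)$, $q'\in N_b(j)$, the edge $\{u,v\}$ is called its source, written $S(q,q')=(u,v)$. *)

theory Defs
  imports Complex_Main "HOL-Library.Extended_Real"
begin

definition simple_graph :: "'v set \<Rightarrow> 'v set set \<Rightarrow> bool" where
  "simple_graph V E \<longleftrightarrow> (\<forall>e\<in>E. \<exists>u v. u \<in> V \<and> v \<in> V \<and> u \<noteq> v \<and> e = {u, v})"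

definition walk :: "'v set set \<Rightarrow> 'v list \<Rightarrow> bool" where
  "walk F xs \<longleftrightarrow> xs \<noteq> [] \<and> (\<forall>j. Suc j < length xs \<longrightarrow> {xs ! j, xs ! Suc j} \<in> F)"

definition walk_weight :: "('v set \<Rightarrow> nat) \<Rightarrow> 'v list \<Rightarrow> nat" where
  "walk_weight w xs = (\<Sum>j<length xs - 1. w {xs ! j, xs ! Suc j})"

definition connected_on :: "'v set \<Rightarrow> 'v set set \<Rightarrow> bool" where
  "connected_on V F \<longleftrightarrow> (\<forall>u\<in>V. \<forall>v\<in>V. \<exists>xs. walk F xs \<and> hd xs = u \<and> last xs = v)"

text \<open>Shortest-path distance in (V,F) w.r.t. weights w (infinity if unreachable).\<close>
definition gdist :: "('v set \<Rightarrow> nat) \<Rightarrow> 'v set set \<Rightarrow> 'v \<Rightarrow> 'v \<Rightarrow> ereal" where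
  "gdist w F u v = Inf {ereal (real (walk_weight w xs)) | xs. walk F xs \<and> hd xs = u \<and> last xs = v}"

definition spanning_tree :: "'v set \<Rightarrow> 'v set set \<Rightarrow> 'v set set \<Rightarrow> bool" where
  "spanning_tree V E T \<longleftrightarrow> T \<subseteq> E \<and> connected_on V T \<and> (\<forall>e\<in>T. \<not> connected_on V (T - {e}))"

definition MST :: "'v set \<Rightarrow> 'v set set \<Rightarrow> ('v set \<Rightarrow> nat) \<Rightarrow> 'v set set \<Rightarrow> bool" where
  "MST V E w T \<longleftrightarrow> spanning_tree V E T \<and>
     (\<forall>T'. spanning_tree V E T' \<longrightarrow> sum w T \<le> sum w T')"

definition unique_MST :: "'v set \<Rightarrow> 'v set set \<Rightarrow> ('v set \<Rightarrow> nat) \<Rightarrow> 'v set set \<Rightarrow> bool" where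
  "unique_MST V E w Z \<longleftrightarrow> MST V E w Z \<and> (\<forall>T. MST V E w T \<longrightarrow> T = Z)"

definition greedy_step :: "('v set \<Rightarrow> nat) \<Rightarrow> real \<Rightarrow> 'v set set \<Rightarrow> 'v set \<Rightarrow> 'v set set" where
  "greedy_step w t H e =
     (if \<exists>u v. e = {u, v} \<and> gdist w H u v > ereal (t * real (w e)) then insert e H else H)"

text \<open>Edges processed in the order of the list es (assumed sorted by non-decreasing weight).\<close>
definition greedy_spanner :: "('v set \<Rightarrow> nat) \<Rightarrow> real \<Rightarrow> 'v set list \<Rightarrow> 'v set set" where
  "greedy_spanner w t es = foldl (greedy_step w t) {} es"

definition on_tree_path :: "'v set set \<Rightarrow> 'v \<Rightarrow> 'v \<Rightarrow> 'v \<Rightarrow> bool" where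
  "on_tree_path Z r x p \<longleftrightarrow>
     (\<exists>xs. walk Z xs \<and> distinct xs \<and> hd xs = r \<and> last xs = x \<and> p \<in> set xs)"

text \<open>vs is a preorder (DFS) traversal of tree Z rooted at hd vs: every vertex, when visited,
  has its parent (its Z-neighbour on the root path) on the current root path, i.e. on the
  path from the root to the previously visited vertex.\<close>
definition is_preorder :: "'v set \<Rightarrow> 'v set set \<Rightarrow> 'v list \<Rightarrow> bool" where
  "is_preorder V Z vs \<longleftrightarrow> vs \<noteq> [] \<and> distinct vs \<and> set vs = V \<and>
     (\<forall>j. 0 < j \<and> j < length vs \<longrightarrow>
        (\<exists>p. {p, vs ! j} \<in> Z \<and> on_tree_path Z (hd vs) (vs ! j) p
              \<and> on_tree_path Z (hd vs) (vs ! (j - 1)) p))"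

text \<open>Position ell_m of vertex vs!m on P (0-indexed list, so ell 0 = 0).\<close>
definition ell :: "('v set \<Rightarrow> nat) \<Rightarrow> 'v set set \<Rightarrow> 'v list \<Rightarrow> nat \<Rightarrow> real" where
  "ell w Z vs m = (\<Sum>j\<in>{1..m}. real_of_ereal (gdist w Z (vs ! (j - 1)) (vs ! j)))"

definition tour_length :: "('v set \<Rightarrow> nat) \<Rightarrow> 'v set set \<Rightarrow> 'v list \<Rightarrow> real" where
  "tour_length w Z vs = ell w Z vs (length vs - 1)"

text \<open>Vertex u lies in interval I_h = {p_((h-1)L/s), ..., p_(hL/s)}.\<close>
definition vertex_in_interval ::
  "('v set \<Rightarrow> nat) \<Rightarrow> 'v set set \<Rightarrow> 'v list \<Rightarrow> nat \<Rightarrow> 'v \<Rightarrow> nat \<Rightarrow> bool" where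
  "vertex_in_interval w Z vs s u h \<longleftrightarrow>
     (\<exists>m<length vs. vs ! m = u \<and>
        real (h - 1) * tour_length w Z vs / real s \<le> ell w Z vs m \<and>
        ell w Z vs m \<le> real h * tour_length w Z vs / real s)"

text \<open>Points of P are identified with their index in {0..L}; r j is the index of r_j.
  N_b(j) = {r_h : h in [s], |j-h| <= b}.\<close>
definition Nb :: "nat \<Rightarrow> (nat \<Rightarrow> nat) \<Rightarrow> nat \<Rightarrow> nat \<Rightarrow> nat set" where
  "Nb s r b j = {r h | h. 1 \<le> h \<and> h \<le> s \<and> \<bar>int j - int h\<bar> \<le> int b}"

definition maximal_matching_between :: "'a set \<Rightarrow> 'a set \<Rightarrow> 'a set set \<Rightarrow> bool" where
  "maximal_matching_between A B M \<longleftrightarrow>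
     M \<subseteq> {{q, q'} | q q'. q \<in> A \<and> q' \<in> B \<and> q \<noteq> q'} \<and>
     (\<forall>f\<in>M. \<forall>g\<in>M. f \<noteq> g \<longrightarrow> f \<inter> g = {}) \<and>
     (\<forall>q\<in>A. \<forall>q'\<in>B. q \<noteq> q' \<longrightarrow> (\<exists>f\<in>M. q \<in> f \<or> q' \<in> f))"

end

theory Submission
  imports Defs
begin

text \<open>Suppose the representatives \<open>{q, q'}\<close> were matched on behalf of two distinct edges
  \<open>e = {x, y}\<close> and \<open>e' = {x', y'}\<close> of \<open>E\<^sub>i\<close>. The endpoints of a source lie within \<open>b + 1\<close>
  intervals of the matched representatives, i.e. within \<open>\<epsilon> w(e) / 4\<close> of them along \<open>P\<close>, and two
  points of \<open>P\<close> are joined by a tree walk as long as their distance on \<open>P\<close>. Hence \<open>x, x'\<close> and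
  \<open>y', y\<close> are joined by tree walks of total weight below \<open>\<epsilon> max(w(e), w(e'))\<close>. Let \<open>e'\<close> be
  processed before \<open>e\<close>. Tree edges lighter than \<open>e\<close> were in the spanner by then (cut property),
  they connect the endpoints of \<open>e\<close> and of \<open>e'\<close> (cycle property), and in a tree the two walks can
  be rerouted through them without getting heavier: either into a walk \<open>x \<leadsto> y\<close>, or into walks
  \<open>x \<leadsto> x'\<close> and \<open>y' \<leadsto> y\<close>, completed by \<open>e'\<close>. Either way the endpoints of \<open>e\<close> were within
  stretch \<open>1 + \<epsilon> \<le> t\<close>, so the greedy algorithm would not have taken \<open>e\<close>.\<close>

section \<open>Walks and reachability\<close>

definition reachable :: "'v set set \<Rightarrow> 'v \<Rightarrow> 'v \<Rightarrow> bool" where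
  "reachable F x y \<longleftrightarrow> (\<exists>xs. walk F xs \<and> hd xs = x \<and> last xs = y)"

lemma walk_singleton [simp]: "walk F [x]"
  by (simp add: walk_def)

lemma not_walk_Nil [simp]: "\<not> walk F []"
  by (simp add: walk_def)

lemma walk_Cons_Cons [simp]: "walk F (x # y # zs) \<longleftrightarrow> {x, y} \<in> F \<and> walk F (y # zs)"
  unfolding walk_def by (auto simp: less_Suc_eq_0_disj)

lemma walk_weight_singleton [simp]: "walk_weight w [x] = 0"
  by (simp add: walk_weight_def)

lemma walk_weight_Cons_Cons [simp]:
  "walk_weight w (x # y # zs) = w {x, y} + walk_weight w (y # zs)"
  unfolding walk_weight_def by (simp add: sum.lessThan_Suc_shift del: sum.lessThan_Suc)

lemma walk_Cons: "xs \<noteq> [] \<Longrightarrow> walk F (x # xs) \<longleftrightarrow> {x, hd xs} \<in> F \<and> walk F xs"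
  by (cases xs) auto

lemma walk_weight_Cons: "xs \<noteq> [] \<Longrightarrow> walk_weight w (x # xs) = w {x, hd xs} + walk_weight w xs"
  by (cases xs) auto

lemma walk_edge: "walk F xs \<Longrightarrow> Suc i < length xs \<Longrightarrow> {xs ! i, xs ! Suc i} \<in> F"
  unfolding walk_def by auto

lemma walk_mono: "walk F xs \<Longrightarrow> F \<subseteq> G \<Longrightarrow> walk G xs"
  unfolding walk_def by auto

lemma walk_restrict:
  "walk F xs \<Longrightarrow> (\<And>i. Suc i < length xs \<Longrightarrow> {xs ! i, xs ! Suc i} \<in> G) \<Longrightarrow> walk G xs"
  unfolding walk_def by auto

lemma walk_take: "walk F xs \<Longrightarrow> j < length xs \<Longrightarrow> walk F (take (Suc j) xs)"
  unfolding walk_def by auto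

lemma walk_drop: "walk F xs \<Longrightarrow> j < length xs \<Longrightarrow> walk F (drop j xs)"
  unfolding walk_def by (auto simp: add.commute[of j])

lemma walk_append:
  assumes "walk F xs" "walk F ys" "last xs = hd ys"
  shows "walk F (xs @ tl ys)"
proof -
  have "xs \<noteq> []" using assms by auto
  then show ?thesis using assms
  proof (induction xs rule: list_nonempty_induct)
    case (single x)
    then show ?case by (cases ys) auto
  qed (auto simp: walk_Cons)
qed

lemma walk_weight_append:
  assumes "xs \<noteq> []" "ys \<noteq> []" "last xs = hd ys"
  shows "walk_weight w (xs @ tl ys) = walk_weight w xs + walk_weight w ys"
  using assms
proof (induction xs rule: list_nonempty_induct)
  case (single x)
  then show ?case by (cases ys) auto
next
  case (cons x xs)
  then show ?case by (cases xs) auto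
qed

lemma last_append_tl: "ys \<noteq> [] \<Longrightarrow> last xs = hd ys \<Longrightarrow> last (xs @ tl ys) = last ys"
  by (cases ys) auto

lemma walk_append_edge:
  assumes A: "walk F A" and B: "walk F B" and edge: "{last A, hd B} \<in> F"
  shows "walk F (A @ B)" "walk_weight w (A @ B) = walk_weight w A + w {last A, hd B} + walk_weight w B"
proof -
  have "A \<noteq> []" "B \<noteq> []" using A B by auto
  have step: "walk F [last A, hd B]" "last A = hd [last A, hd B]" using edge by simp_all
  have A': "walk F (A @ [hd B])" "last (A @ [hd B]) = hd B"
    using walk_append[OF A step] by simp_all
  have "A @ B = (A @ [hd B]) @ tl B" using \<open>B \<noteq> []\<close> by simp
  then show "walk F (A @ B)"
    "walk_weight w (A @ B) = walk_weight w A + w {last A, hd B} + walk_weight w B"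
    using walk_append[OF A'(1) B A'(2)] walk_weight_append[OF _ \<open>B \<noteq> []\<close> A'(2), of w]
      walk_weight_append[OF \<open>A \<noteq> []\<close> _ step(2), of w]
    by auto
qed

lemma walk_rev:
  assumes "walk F xs"
  shows "walk F (rev xs)" "walk_weight w (rev xs) = walk_weight w xs"
proof -
  have "xs \<noteq> []" using assms by auto
  then have "walk F (rev xs) \<and> walk_weight w (rev xs) = walk_weight w xs" using assms
  proof (induction xs rule: list_nonempty_induct)
    case (cons x xs)
    then have IH: "walk F (rev xs)" "walk_weight w (rev xs) = walk_weight w xs"
      and edge: "{hd xs, x} \<in> F"
      by (auto simp: walk_Cons insert_commute)
    have glue: "last (rev xs) = hd [hd xs, x]" using cons.hyps by (simp add: last_rev)
    have "rev (x # xs) = rev xs @ tl [hd xs, x]" by simp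
    then show ?case
      using walk_append[OF IH(1) _ glue] walk_weight_append[OF _ _ glue, of w] edge IH(2) cons.hyps
      by (auto simp: insert_commute walk_weight_Cons)
  qed simp
  then show "walk F (rev xs)" "walk_weight w (rev xs) = walk_weight w xs" by auto
qed

lemma walk_weight_take:
  "j < length xs \<Longrightarrow> walk_weight w (take (Suc j) xs) = (\<Sum>i<j. w {xs ! i, xs ! Suc i})"
  unfolding walk_weight_def by (intro sum.cong) auto

lemma walk_weight_drop:
  "walk_weight w (drop j xs) = (\<Sum>i\<in>{j..<length xs - 1}. w {xs ! i, xs ! Suc i})"
proof -
  have "walk_weight w (drop j xs) = (\<Sum>i<length xs - 1 - j. w {xs ! (j + i), xs ! Suc (j + i)})"
    unfolding walk_weight_def by (intro sum.cong) auto
  also have "\<dots> = (\<Sum>i\<in>{j..<length xs - 1}. w {xs ! i, xs ! Suc i})"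
    by (rule sum.reindex_bij_witness[of _ "\<lambda>i. i - j" "\<lambda>i. j + i"]) auto
  finally show ?thesis .
qed

lemma walk_cut_at_edge:
  assumes W: "walk F W" and f: "Suc i < length W" "{W ! i, W ! Suc i} = f"
  obtains A B where "walk (F - {f}) A" "walk (F - {f}) B" "hd A = hd W" "last A \<in> f"
    "hd B \<in> f" "last B = last W"
    "walk_weight w A + walk_weight w B \<le> walk_weight w W" "length A + length B \<le> length W"
proof -
  define S where "S = {i. Suc i < length W \<and> {W ! i, W ! Suc i} = f}"
  have S: "finite S" "i \<in> S" using f by (auto simp: S_def intro: finite_subset[of _ "{..<length W}"])
  define j j' where "j = Min S" and "j' = Max S"
  have "j \<in> S" "j' \<in> S" using S unfolding j_def j'_def by (auto intro: Min_in Max_in)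
  moreover have "j \<le> j'" using S Min_le[of S i] Max_ge[of S i] unfolding j_def j'_def by linarith
  ultimately have j: "Suc j < length W" "{W ! j, W ! Suc j} = f"
    and j': "Suc j' < length W" "{W ! j', W ! Suc j'} = f" and "j \<le> j'"
    unfolding S_def by auto
  have not_f: "{W ! l, W ! Suc l} \<noteq> f" if "Suc l < length W" "l < j \<or> j' < l" for l
  proof
    assume "{W ! l, W ! Suc l} = f"
    then have "l \<in> S" using that(1) unfolding S_def by simp
    then show False using that(2) S(1) Min_le[of S l] Max_ge[of S l] unfolding j_def j'_def by linarith
  qed
  define A B where "A = take (Suc j) W" and "B = drop (Suc j') W"
  have "walk (F - {f}) A"
    unfolding A_def
    by (rule walk_restrict[OF walk_take[OF W]]) (use j not_f walk_edge[OF W] in auto)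
  moreover have "walk (F - {f}) B"
    unfolding B_def
    by (rule walk_restrict[OF walk_drop[OF W]]) (use j' not_f walk_edge[OF W] in auto)
  moreover have "hd A = hd W" unfolding A_def by (cases W) auto
  moreover have "last A \<in> f" "hd B \<in> f" "last B = last W"
    using j j' by (auto simp: A_def B_def take_Suc_conv_app_nth hd_drop_conv_nth)
  moreover have "walk_weight w A + walk_weight w B \<le> walk_weight w W"
  proof -
    have "walk_weight w A + walk_weight w B
        = (\<Sum>l<j. w {W ! l, W ! Suc l}) + (\<Sum>l\<in>{Suc j'..<length W - 1}. w {W ! l, W ! Suc l})"
      using j by (simp add: A_def B_def walk_weight_take walk_weight_drop)
    also have "\<dots> = (\<Sum>l\<in>{..<j} \<union> {Suc j'..<length W - 1}. w {W ! l, W ! Suc l})"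
      using \<open>j \<le> j'\<close> by (subst sum.union_disjoint) auto
    also have "\<dots> \<le> (\<Sum>l<length W - 1. w {W ! l, W ! Suc l})"
      using j by (intro sum_mono2) auto
    finally show ?thesis unfolding walk_weight_def .
  qed
  moreover have "length A + length B \<le> length W"
    using j j' \<open>j \<le> j'\<close> by (simp add: A_def B_def)
  ultimately show ?thesis by (rule that)
qed

text \<open>After the last exit from \<open>C\<close> the walk stays outside \<open>C\<close>, hence avoids the exit edge.\<close>

lemma walk_last_exit:
  assumes W: "walk F W" "hd W \<in> C" "last W \<notin> C"
  obtains j where "Suc j < length W" "W ! j \<in> C" "W ! Suc j \<notin> C"
    "walk (F - {{W ! j, W ! Suc j}}) (drop (Suc j) W)"
proof -
  define S where "S = {i. i < length W \<and> W ! i \<in> C}"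
  have "W \<noteq> []" using W by auto
  then have "0 \<in> S" "finite S" using W unfolding S_def by (auto simp: hd_conv_nth)
  define j where "j = Max S"
  have "j \<in> S" using \<open>0 \<in> S\<close> \<open>finite S\<close> unfolding j_def by (intro Max_in) auto
  have after: "W ! i \<notin> C" if "i < length W" "j < i" for i
  proof
    assume "W ! i \<in> C"
    then have "i \<in> S" using that(1) unfolding S_def by simp
    then show False using Max_ge[OF \<open>finite S\<close>] that(2) unfolding j_def by fastforce
  qed
  moreover have "j \<noteq> length W - 1" using \<open>j \<in> S\<close> W \<open>W \<noteq> []\<close> by (auto simp: S_def last_conv_nth)
  ultimately have j: "Suc j < length W" "W ! j \<in> C" "W ! Suc j \<notin> C"
    using \<open>j \<in> S\<close> unfolding S_def by auto
  have "walk (F - {{W ! j, W ! Suc j}}) (drop (Suc j) W)"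
  proof (rule walk_restrict[OF walk_drop[OF W(1) j(1)]])
    fix i assume i: "Suc i < length (drop (Suc j) W)"
    have "W ! (Suc j + i) \<notin> C" "W ! Suc (Suc j + i) \<notin> C" using after i by auto
    then show "{drop (Suc j) W ! i, drop (Suc j) W ! Suc i} \<in> F - {{W ! j, W ! Suc j}}"
      using walk_edge[OF W(1), of "Suc j + i"] i j(2) by (auto simp: doubleton_eq_iff)
  qed
  with j show ?thesis by (rule that)
qed

lemma reachableI: "walk F xs \<Longrightarrow> reachable F (hd xs) (last xs)"
  unfolding reachable_def by blast

lemma reachable_refl [simp]: "reachable F x x"
  using reachableI[OF walk_singleton] by simp

lemma reachable_edge: "{x, y} \<in> F \<Longrightarrow> reachable F x y"
  using reachableI[of F "[x, y]"] by simp

lemma reachable_sym: "reachable F x y \<Longrightarrow> reachable F y x"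
  unfolding reachable_def by (metis walk_rev(1) hd_rev last_rev)

lemma reachable_trans [trans]: "reachable F x y \<Longrightarrow> reachable F y z \<Longrightarrow> reachable F x z"
  unfolding reachable_def
  by (metis walk_append hd_append2 last_append_tl not_walk_Nil)

lemma reachable_mono: "reachable F x y \<Longrightarrow> F \<subseteq> G \<Longrightarrow> reachable G x y"
  unfolding reachable_def using walk_mono by blast

lemma connected_onI: "(\<And>z. z \<in> V \<Longrightarrow> reachable F p z) \<Longrightarrow> connected_on V F"
  unfolding connected_on_def reachable_def[symmetric]
  by (meson reachable_sym reachable_trans)

lemma gdist_le_walk_weight:
  "walk F xs \<Longrightarrow> gdist w F (hd xs) (last xs) \<le> ereal (real (walk_weight w xs))"
  unfolding gdist_def by (intro Inf_lower) blast

lemma gdist_attained: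
  assumes "reachable F u v"
  obtains xs where "walk F xs" "hd xs = u" "last xs = v"
    "gdist w F u v = ereal (real (walk_weight w xs))"
proof -
  define P where "P n \<longleftrightarrow> (\<exists>xs. walk F xs \<and> hd xs = u \<and> last xs = v \<and> walk_weight w xs = n)" for n
  have "P (LEAST n. P n)" using assms LeastI_ex[of P] unfolding P_def reachable_def by blast
  then obtain xs where xs: "walk F xs" "hd xs = u" "last xs = v"
    "walk_weight w xs = (LEAST n. P n)" unfolding P_def by blast
  have "gdist w F u v = ereal (real (walk_weight w xs))"
    unfolding gdist_def
  proof (rule antisym)
    show "ereal (real (walk_weight w xs)) \<le> Inf {ereal (real (walk_weight w ys)) |ys. walk F ys \<and> hd ys = u \<and> last ys = v}"
      using xs(4) by (auto intro!: Inf_greatest Least_le simp: P_def)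
  qed (use xs in \<open>force intro: Inf_lower\<close>)
  with xs show ?thesis by (intro that)
qed

lemma gdist_unreachable: "\<not> reachable F u v \<Longrightarrow> gdist w F u v = \<infinity>"
proof -
  assume "\<not> reachable F u v"
  then have "{ereal (real (walk_weight w xs)) |xs. walk F xs \<and> hd xs = u \<and> last xs = v} = {}"
    unfolding reachable_def by blast
  then show ?thesis unfolding gdist_def by (simp only: Inf_empty) (simp add: top_ereal_def)
qed

lemma gdist_commute: "gdist w F u v = gdist w F v u"
proof -
  have "gdist w F v u \<le> gdist w F u v" for u v
  proof (cases "reachable F u v")
    case True
    then obtain xs where xs: "walk F xs" "hd xs = u" "last xs = v"
      "gdist w F u v = ereal (real (walk_weight w xs))"
      by (rule gdist_attained)
    have "gdist w F v u \<le> ereal (real (walk_weight w (rev xs)))"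
      using gdist_le_walk_weight[OF walk_rev(1)[OF xs(1)]] xs(2,3) by (simp add: hd_rev last_rev)
    then show ?thesis using xs(4) walk_rev(2)[OF xs(1)] by simp
  qed (simp add: gdist_unreachable)
  then show ?thesis by (meson antisym)
qed

lemma walk_weight_take_le:
  assumes "j < length xs"
  shows "walk_weight w (take (Suc j) xs) \<le> walk_weight w xs"
proof -
  have "(\<Sum>i<j. w {xs ! i, xs ! Suc i}) \<le> (\<Sum>i<length xs - 1. w {xs ! i, xs ! Suc i})"
    using assms by (intro sum_mono2) auto
  then show ?thesis using walk_weight_take[OF assms] unfolding walk_weight_def by simp
qed

lemma walk_suffix_avoiding_edge:
  assumes "walk F W"
  obtains B where "walk (F - {f}) B" "hd B = hd W \<or> hd B \<in> f" "last B = last W"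
    "walk_weight w B \<le> walk_weight w W"
proof (cases "\<exists>i. Suc i < length W \<and> {W ! i, W ! Suc i} = f")
  case True
  then obtain i where "Suc i < length W" "{W ! i, W ! Suc i} = f" by blast
  then obtain A B where "walk (F - {f}) B" "hd B \<in> f" "last B = last W"
    "walk_weight w A + walk_weight w B \<le> walk_weight w W"
    by (rule walk_cut_at_edge[OF assms])
  then show ?thesis using that by simp
next
  case False
  then have "walk (F - {f}) W" by (auto intro: walk_restrict[OF assms] walk_edge[OF assms])
  with that show ?thesis by blast
qed

section \<open>The minimum spanning tree\<close>

locale mst_graph =
  fixes V :: "'v set" and E :: "'v set set" and w :: "'v set \<Rightarrow> nat" and Z :: "'v set set"
  assumes finite_vertices: "finite V" and simple: "simple_graph V E" and mst: "unique_MST V E w Z"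
begin

lemma spanning_tree: "spanning_tree V E Z"
  using mst unfolding unique_MST_def MST_def by simp

lemma tree_subset: "Z \<subseteq> E"
  using spanning_tree unfolding spanning_tree_def by simp

lemma edge_endpoints: "e \<in> E \<Longrightarrow> \<exists>u v. u \<in> V \<and> v \<in> V \<and> u \<noteq> v \<and> e = {u, v}"
  using simple unfolding simple_graph_def by blast

lemma finite_edges: "finite E"
proof (rule finite_subset)
  show "E \<subseteq> Pow V" using edge_endpoints by blast
qed (use finite_vertices in simp)

lemma reachable_tree: "u \<in> V \<Longrightarrow> v \<in> V \<Longrightarrow> reachable Z u v"
  using spanning_tree unfolding spanning_tree_def connected_on_def reachable_def by blast

lemma tree_edge_endpoints: "f \<in> Z \<Longrightarrow> x \<in> f \<Longrightarrow> x \<in> V"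
  using edge_endpoints tree_subset by blast

lemma tree_minus_edge_reachable:
  assumes f: "f \<in> Z" "f = {p, q}" and z: "z \<in> V"
  shows "reachable (Z - {f}) p z \<or> reachable (Z - {f}) q z"
proof -
  have "p \<in> V" using tree_edge_endpoints f by blast
  then obtain W where W: "walk Z W" "hd W = p" "last W = z"
    using reachable_tree[OF _ z] unfolding reachable_def by blast
  obtain B where B: "walk (Z - {f}) B" "hd B = hd W \<or> hd B \<in> f" "last B = last W"
    by (rule walk_suffix_avoiding_edge[OF W(1)])
  have "reachable (Z - {f}) (hd B) z" using reachableI[OF B(1)] B(3) W(3) by simp
  moreover have "hd B = p \<or> hd B = q" using B(2) W(2) f(2) by auto
  ultimately show ?thesis by auto
qed

text \<open>Otherwise the tree minus \<open>f\<close> would still be connected.\<close>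

lemma tree_edge_separates:
  assumes f: "f \<in> Z" "a \<in> f" "b \<in> f" and ab: "reachable (Z - {f}) a b"
  shows "a = b"
proof (rule ccontr)
  assume "a \<noteq> b"
  then have "f = {a, b}" using f edge_endpoints tree_subset by fastforce
  then have "reachable (Z - {f}) a z" if "z \<in> V" for z
    using tree_minus_edge_reachable[OF f(1) \<open>f = {a, b}\<close> that] reachable_trans[OF ab] by blast
  then have "connected_on V (Z - {f})" by (rule connected_onI)
  then show False using spanning_tree f(1) unfolding spanning_tree_def by blast
qed

lemma spanning_tree_within:
  assumes "F \<subseteq> E" "connected_on V F"
  obtains T where "T \<subseteq> F" "spanning_tree V E T"
proof -
  define P where "P n \<longleftrightarrow> (\<exists>T. T \<subseteq> F \<and> connected_on V T \<and> card T = n)" for n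
  have "P (LEAST n. P n)" using assms LeastI_ex[of P] unfolding P_def by blast
  then obtain T where T: "T \<subseteq> F" "connected_on V T" "card T = (LEAST n. P n)"
    unfolding P_def by blast
  have "finite T" using T(1) assms(1) finite_edges by (meson finite_subset)
  have "\<not> connected_on V (T - {e})" if "e \<in> T" for e
  proof
    assume "connected_on V (T - {e})"
    then have "P (card (T - {e}))" using T(1) unfolding P_def by blast
    then have "card T \<le> card (T - {e})" unfolding T(3) by (rule Least_le)
    then show False using card_Diff1_less[OF \<open>finite T\<close> that] by simp
  qed
  then have "spanning_tree V E T" using T(1,2) assms(1) unfolding spanning_tree_def by blast
  with T(1) show ?thesis by (rule that)
qed

text \<open>Uniqueness of the minimum spanning tree makes every exchange strictly worse.\<close>

lemma exchange_heavier:
  assumes f: "f \<in> Z" and g: "g \<in> E" "g \<notin> Z" and c: "connected_on V (insert g (Z - {f}))"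
  shows "w f < w g"
proof (rule ccontr)
  assume "\<not> w f < w g"
  have "insert g (Z - {f}) \<subseteq> E" using tree_subset g(1) by blast
  then obtain T where T: "T \<subseteq> insert g (Z - {f})" "spanning_tree V E T"
    using c by (rule spanning_tree_within)
  have "finite Z" using tree_subset finite_edges by (meson finite_subset)
  have "sum w T \<le> sum w (insert g (Z - {f}))"
    using T(1) \<open>finite Z\<close> by (intro sum_mono2) auto
  also have "\<dots> = w g + sum w (Z - {f})" using \<open>finite Z\<close> g(2) by simp
  also have "\<dots> \<le> sum w Z" using \<open>\<not> w f < w g\<close> \<open>finite Z\<close> f by (simp add: sum.remove)
  finally have "MST V E w T"
    using T(2) mst unfolding unique_MST_def MST_def by (meson order_trans)
  then have "T = Z" using mst unfolding unique_MST_def by blast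
  then show False using T(1) f g(2) by auto
qed

lemma tree_edge_lighter_than_reconnecting_edge:
  assumes f: "f \<in> Z" "f = {p, q}" and g: "g \<in> E" "g \<notin> Z" "g = {a, b}"
    and pa: "reachable (Z - {f}) p a" and qb: "reachable (Z - {f}) q b"
  shows "w f < w g"
proof (rule exchange_heavier[OF f(1) g(1,2)])
  define F where "F = insert g (Z - {f})"
  have sub: "Z - {f} \<subseteq> F" unfolding F_def by blast
  have "reachable F q p"
  proof -
    have "reachable F q b" using reachable_mono[OF qb sub] .
    also have "reachable F b a" using g(3) by (intro reachable_edge) (simp add: F_def insert_commute)
    also have "reachable F a p" using reachable_mono[OF reachable_sym[OF pa] sub] .
    finally show ?thesis .
  qed
  have "reachable F p z" if "z \<in> V" for z
  proof (cases "reachable (Z - {f}) p z")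
    case True
    then show ?thesis by (rule reachable_mono[OF _ sub])
  next
    case False
    then have "reachable F q z"
      using tree_minus_edge_reachable[OF f that] reachable_mono[OF _ sub] by blast
    then show ?thesis using reachable_trans[OF reachable_sym[OF \<open>reachable F q p\<close>]] by blast
  qed
  then show "connected_on V (insert g (Z - {f}))" unfolding F_def[symmetric] by (rule connected_onI)
qed

lemma mst_cycle_property:
  assumes g: "g \<in> E" "g \<notin> Z" "g = {x, y}"
  shows "reachable {f \<in> Z. w f < w g} x y"
proof (rule ccontr)
  define R where "R = {f \<in> Z. w f < w g}"
  define C where "C = {z. reachable R x z}"
  assume "\<not> reachable {f \<in> Z. w f < w g} x y"
  then have "y \<notin> C" unfolding C_def R_def by simp
  have "x \<in> V" "y \<in> V" using edge_endpoints[OF g(1)] g(3) by (auto simp: doubleton_eq_iff)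
  then obtain W where W: "walk Z W" "hd W = x" "last W = y"
    using reachable_tree unfolding reachable_def by blast
  have "hd W \<in> C" "last W \<notin> C" using W(2,3) \<open>y \<notin> C\<close> unfolding C_def by auto
  then obtain j where j: "Suc j < length W" "W ! j \<in> C" "W ! Suc j \<notin> C"
    and rest: "walk (Z - {{W ! j, W ! Suc j}}) (drop (Suc j) W)"
    by (rule walk_last_exit[OF W(1)])
  define f where "f = {W ! j, W ! Suc j}"
  have "f \<in> Z" using walk_edge[OF W(1) j(1)] unfolding f_def .
  have "f \<notin> R"
  proof
    assume "f \<in> R"
    then have "reachable R (W ! j) (W ! Suc j)" unfolding f_def by (rule reachable_edge)
    then show False using j(2,3) reachable_trans[of R x "W ! j" "W ! Suc j"] unfolding C_def by simp
  qed
  then have RZ: "R \<subseteq> Z - {f}" unfolding R_def by blast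
  have "reachable (Z - {f}) (W ! j) x"
    using j(2) reachable_sym[OF reachable_mono[OF _ RZ]] unfolding C_def by simp
  moreover have "reachable (Z - {f}) (W ! Suc j) y"
    using reachableI[OF rest] j(1) W(3) unfolding f_def by (simp add: hd_drop_conv_nth)
  ultimately have "w f < w g"
    using tree_edge_lighter_than_reconnecting_edge[OF \<open>f \<in> Z\<close> f_def g] by blast
  then show False using \<open>f \<notin> R\<close> \<open>f \<in> Z\<close> unfolding R_def by simp
qed

lemma mst_cut_property:
  assumes f: "f \<in> Z" "f = {p, q}" and G: "G \<subseteq> E - {f}" "\<And>g. g \<in> G \<Longrightarrow> w g \<le> w f"
  shows "\<not> reachable G p q"
proof
  define C where "C = {z. reachable (Z - {f}) p z}"
  assume "reachable G p q"
  then obtain W where W: "walk G W" "hd W = p" "last W = q" unfolding reachable_def by blast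
  have "p \<noteq> q" using edge_endpoints[of f] tree_subset f by (auto simp: doubleton_eq_iff)
  then have "q \<notin> C" using tree_edge_separates[OF f(1)] f(2) unfolding C_def by blast
  moreover have "hd W \<in> C" using W(2) unfolding C_def by simp
  ultimately obtain j where j: "Suc j < length W" "W ! j \<in> C" "W ! Suc j \<notin> C"
    using walk_last_exit[OF W(1)] W(3) by metis
  define g where "g = {W ! j, W ! Suc j}"
  have "g \<in> G" using walk_edge[OF W(1) j(1)] unfolding g_def .
  then have "g \<in> E" "g \<noteq> f" using G(1) by auto
  have "g \<notin> Z"
  proof
    assume "g \<in> Z"
    then have "reachable (Z - {f}) (W ! j) (W ! Suc j)"
      using \<open>g \<noteq> f\<close> unfolding g_def by (intro reachable_edge) auto
    then show False using j(2,3) reachable_trans[of "Z - {f}" p "W ! j" "W ! Suc j"] unfolding C_def by simp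
  qed
  have "W ! Suc j \<in> V" using edge_endpoints[OF \<open>g \<in> E\<close>] unfolding g_def
    by (auto simp: doubleton_eq_iff)
  then have "reachable (Z - {f}) q (W ! Suc j)"
    using tree_minus_edge_reachable[OF f] j(3) unfolding C_def by blast
  moreover have "reachable (Z - {f}) p (W ! j)" using j(2) unfolding C_def by simp
  ultimately have "w f < w g"
    using tree_edge_lighter_than_reconnecting_edge[OF f \<open>g \<in> E\<close> \<open>g \<notin> Z\<close> g_def] by blast
  then show False using G(2)[OF \<open>g \<in> G\<close>] by simp
qed

section \<open>Subforests of the minimum spanning tree\<close>

text \<open>The tree path between two vertices of an \<open>R\<close>-component lies in \<open>R\<close>; a tree walk using an edge
  outside \<open>R\<close> crosses it twice, and cutting out the part in between shortens it.\<close>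

lemma subforest_walk:
  assumes R: "R \<subseteq> Z" and W: "walk Z W" "hd W = x" "last W = y" and xy: "reachable R x y"
  obtains W' where "walk R W'" "hd W' = x" "last W' = y" "walk_weight w W' \<le> walk_weight w W"
  using W
proof (induction "length W" arbitrary: W thesis rule: less_induct)
  case less
  show ?case
  proof (cases "\<forall>i. Suc i < length W \<longrightarrow> {W ! i, W ! Suc i} \<in> R")
    case True
    then have "walk R W" by (intro walk_restrict[OF less.prems(2)]) auto
    then show ?thesis using less.prems(1)[OF _ less.prems(3,4)] by simp
  next
    case False
    then obtain i where i: "Suc i < length W" "{W ! i, W ! Suc i} \<notin> R" by blast
    define f where "f = {W ! i, W ! Suc i}"
    have "f \<in> Z" "f \<notin> R" using walk_edge[OF less.prems(2) i(1)] i(2) unfolding f_def by auto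
    obtain A B where A: "walk (Z - {f}) A" and B: "walk (Z - {f}) B"
      and ends: "hd A = hd W" "last A \<in> f" "hd B \<in> f" "last B = last W"
      and weight: "walk_weight w A + walk_weight w B \<le> walk_weight w W"
      and len: "length A + length B \<le> length W"
      by (rule walk_cut_at_edge[OF less.prems(2) i(1) f_def[symmetric]])
    have "reachable (Z - {f}) (last A) (hd B)"
    proof -
      have "reachable (Z - {f}) (last A) x"
        using reachable_sym[OF reachableI[OF A]] ends(1) less.prems(3) by simp
      also have "reachable (Z - {f}) x y" using R \<open>f \<notin> R\<close> by (intro reachable_mono[OF xy]) blast
      also have "reachable (Z - {f}) y (hd B)"
        using reachable_sym[OF reachableI[OF B]] ends(4) less.prems(4) by simp
      finally show ?thesis .
    qed
    then have glue: "last A = hd B" by (rule tree_edge_separates[OF \<open>f \<in> Z\<close> ends(2,3)])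
    have AB: "A \<noteq> []" "B \<noteq> []" using A B by auto
    have "walk Z (A @ tl B)" using walk_mono[OF walk_append[OF A B glue] Diff_subset] .
    moreover have "hd (A @ tl B) = x" using AB ends(1) less.prems(3) by simp
    moreover have "last (A @ tl B) = y" using last_append_tl[OF AB(2) glue] ends(4) less.prems(4) by simp
    moreover have "length (A @ tl B) < length W" using AB(2) len by (cases B) auto
    moreover have shorter: "walk_weight w (A @ tl B) \<le> walk_weight w W"
      using walk_weight_append[OF AB glue] weight by simp
    ultimately obtain W' where "walk R W'" "hd W' = x" "last W' = y"
      "walk_weight w W' \<le> walk_weight w (A @ tl B)"
      using less.hyps[of "A @ tl B"] by metis
    then show ?thesis using less.prems(1) shorter by simp
  qed
qed

lemma subforest_exit:
  assumes R: "R \<subseteq> Z" and W: "walk Z W" "hd W = x" "last W = x'" and "\<not> reachable R x x'"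
  obtains p q A where "{p, q} \<in> Z" "{p, q} \<notin> R" "p \<noteq> q" "reachable R x p"
    "reachable (Z - {{p, q}}) q x'"
    "walk Z A" "hd A = x" "last A = p" "walk_weight w A \<le> walk_weight w W"
proof -
  define C where "C = {z. reachable R x z}"
  have "hd W \<in> C" "last W \<notin> C" using W(2,3) assms(5) unfolding C_def by auto
  then obtain j where j: "Suc j < length W" "W ! j \<in> C" "W ! Suc j \<notin> C"
    and rest: "walk (Z - {{W ! j, W ! Suc j}}) (drop (Suc j) W)"
    by (rule walk_last_exit[OF W(1)])
  have "{W ! j, W ! Suc j} \<notin> R"
  proof
    assume "{W ! j, W ! Suc j} \<in> R"
    then have "reachable R (W ! j) (W ! Suc j)" by (rule reachable_edge)
    then show False using j(2,3) reachable_trans[of R x "W ! j" "W ! Suc j"] unfolding C_def by simp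
  qed
  moreover have "reachable (Z - {{W ! j, W ! Suc j}}) (W ! Suc j) x'"
    using reachableI[OF rest] j(1) W(3) by (simp add: hd_drop_conv_nth)
  moreover have "walk Z (take (Suc j) W)" "hd (take (Suc j) W) = x" "last (take (Suc j) W) = W ! j"
    "walk_weight w (take (Suc j) W) \<le> walk_weight w W"
    using walk_take[OF W(1)] walk_weight_take_le[of j W w] j(1) W(2)
    by (simp_all) (simp add: take_Suc_conv_app_nth)
  moreover have "W ! j \<noteq> W ! Suc j" "reachable R x (W ! j)" using j(2,3) unfolding C_def by auto
  ultimately show ?thesis using walk_edge[OF W(1) j(1)] that by blast
qed

text \<open>A tree walk from the far side of a tree edge to its near side crosses it; after the last
  crossing it starts at the near endpoint.\<close>

lemma tree_walk_across_edge:
  assumes f: "{p, q} \<in> Z" "p \<noteq> q" and W: "walk Z W" "hd W = u" "last W = v"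
    and qu: "reachable (Z - {{p, q}}) q u" and vp: "reachable (Z - {{p, q}}) v p"
  obtains B where "walk (Z - {{p, q}}) B" "hd B = p" "last B = v" "walk_weight w B \<le> walk_weight w W"
proof -
  obtain B where B: "walk (Z - {{p, q}}) B" "hd B = hd W \<or> hd B \<in> {p, q}" "last B = last W"
    "walk_weight w B \<le> walk_weight w W"
    by (rule walk_suffix_avoiding_edge[OF W(1)])
  have "reachable (Z - {{p, q}}) (hd B) v" using reachableI[OF B(1)] B(3) W(3) by simp
  then have Bp: "reachable (Z - {{p, q}}) (hd B) p" using vp by (rule reachable_trans)
  have "hd B \<noteq> q"
    using tree_edge_separates[OF f(1), of q p] Bp f(2) by auto
  moreover have "hd B \<noteq> u"
    using tree_edge_separates[OF f(1), of q p] reachable_trans[OF qu] Bp f(2) by auto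
  ultimately have "hd B = p" using B(2) W(2) by auto
  with B show ?thesis using W(3) that by simp
qed

text \<open>Either both walks can be kept inside \<open>R\<close>-components, or the first walk leaves the
  component of \<open>x\<close> through a tree edge that the second walk must cross back; the first walk's part
  before that edge, glued to the second walk's part after it, is a tree walk \<open>x \<leadsto> y\<close>.\<close>

lemma subforest_reroute:
  assumes R: "R \<subseteq> Z" and xy: "reachable R x y" and xy': "reachable R x' y'"
    and W1: "walk Z W1" "hd W1 = x" "last W1 = x'"
    and W2: "walk Z W2" "hd W2 = y'" "last W2 = y"
  shows "(\<exists>W. walk R W \<and> hd W = x \<and> last W = y \<and>
            walk_weight w W \<le> walk_weight w W1 + walk_weight w W2) \<or>
         (\<exists>A B. walk R A \<and> hd A = x \<and> last A = x' \<and> walk_weight w A \<le> walk_weight w W1 \<and>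
            walk R B \<and> hd B = y' \<and> last B = y \<and> walk_weight w B \<le> walk_weight w W2)"
proof (cases "reachable R x x'")
  case True
  have "reachable R y' y"
    using reachable_trans[OF reachable_trans[OF reachable_sym[OF xy'] reachable_sym[OF True]] xy] .
  obtain A where "walk R A" "hd A = x" "last A = x'" "walk_weight w A \<le> walk_weight w W1"
    by (rule subforest_walk[OF R W1 True])
  moreover obtain B where "walk R B" "hd B = y'" "last B = y" "walk_weight w B \<le> walk_weight w W2"
    by (rule subforest_walk[OF R W2 \<open>reachable R y' y\<close>])
  ultimately show ?thesis by blast
next
  case False
  obtain p q A where f: "{p, q} \<in> Z" "{p, q} \<notin> R" "p \<noteq> q" and "reachable R x p"
    and qx': "reachable (Z - {{p, q}}) q x'"
    and A: "walk Z A" "hd A = x" "last A = p" "walk_weight w A \<le> walk_weight w W1"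
    by (rule subforest_exit[OF R W1 False])
  have RZ: "R \<subseteq> Z - {{p, q}}" using R f(2) by blast
  have "reachable (Z - {{p, q}}) q y'" using reachable_trans[OF qx' reachable_mono[OF xy' RZ]] .
  moreover have "reachable (Z - {{p, q}}) y p"
    using reachable_mono[OF reachable_trans[OF reachable_sym[OF xy] \<open>reachable R x p\<close>] RZ] .
  ultimately obtain B where B: "walk (Z - {{p, q}}) B" "hd B = p" "last B = y"
    "walk_weight w B \<le> walk_weight w W2"
    by (rule tree_walk_across_edge[OF f(1,3) W2])
  have glue: "last A = hd B" using A(3) B(2) by simp
  have "A \<noteq> []" "B \<noteq> []" using A(1) B(1) by auto
  then have "walk Z (A @ tl B)" "hd (A @ tl B) = x" "last (A @ tl B) = y"
    "walk_weight w (A @ tl B) \<le> walk_weight w W1 + walk_weight w W2"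
    using walk_append[OF A(1) walk_mono[OF B(1)] glue] A B(3,4)
      last_append_tl[OF _ glue] walk_weight_append[OF _ _ glue]
    by auto
  then obtain W where "walk R W" "hd W = x" "last W = y"
    "walk_weight w W \<le> walk_weight w (A @ tl B)"
    using subforest_walk[OF R _ _ _ xy] by blast
  then show ?thesis using \<open>walk_weight w (A @ tl B) \<le> _\<close> by auto
qed

lemma subforest_detour:
  assumes R: "R \<subseteq> Z" "R \<subseteq> H" and edge: "{x', y'} \<in> H"
    and xy: "reachable R x y" and xy': "reachable R x' y'"
    and W1: "walk Z W1" "hd W1 = x" "last W1 = x'"
    and W2: "walk Z W2" "hd W2 = y'" "last W2 = y"
  obtains P where "walk H P" "hd P = x" "last P = y"
    "walk_weight w P \<le> walk_weight w W1 + walk_weight w W2 + w {x', y'}"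
  using subforest_reroute[OF R(1) xy xy' W1 W2]
proof (elim disjE exE conjE)
  fix W assume "walk R W" "hd W = x" "last W = y"
    "walk_weight w W \<le> walk_weight w W1 + walk_weight w W2"
  then show ?thesis using that[OF walk_mono[OF _ R(2)]] by simp
next
  fix A B assume A: "walk R A" "hd A = x" "last A = x'" "walk_weight w A \<le> walk_weight w W1"
    and B: "walk R B" "hd B = y'" "last B = y" "walk_weight w B \<le> walk_weight w W2"
  have "walk H (A @ B)" "walk_weight w (A @ B) = walk_weight w A + w {x', y'} + walk_weight w B"
    using walk_append_edge[OF walk_mono[OF A(1) R(2)] walk_mono[OF B(1) R(2)]] edge A(3) B(2)
    by simp_all
  moreover have "A \<noteq> []" "B \<noteq> []" using A(1) B(1) by auto
  ultimately show ?thesis using that[of "A @ B"] A(2,4) B(3,4) by simp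
qed

section \<open>Positions on the tour\<close>

text \<open>Consecutive tour vertices are joined by shortest tree walks, whose weights add up to the
  positions on \<open>P\<close>.\<close>

lemma tour_walk:
  assumes vs: "set vs \<subseteq> V" and m: "m \<le> m'" "m' < length vs"
  obtains W where "walk Z W" "hd W = vs ! m" "last W = vs ! m'"
    "real (walk_weight w W) = ell w Z vs m' - ell w Z vs m"
  using m
proof (induction m' arbitrary: thesis)
  case 0
  then show ?case using "0.prems"(1)[of "[vs ! 0]"] by simp
next
  case (Suc m')
  show ?case
  proof (cases "m = Suc m'")
    case True
    then show ?thesis using Suc.prems(1)[of "[vs ! m]"] by simp
  next
    case False
    then obtain W where W: "walk Z W" "hd W = vs ! m" "last W = vs ! m'"
      "real (walk_weight w W) = ell w Z vs m' - ell w Z vs m"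
      using Suc.IH[of thesis] Suc.prems(2,3) by (metis Suc_lessD le_SucE)
    have "vs ! m' \<in> V" "vs ! Suc m' \<in> V" using vs Suc.prems(3) by auto
    then obtain W' where W': "walk Z W'" "hd W' = vs ! m'" "last W' = vs ! Suc m'"
      "gdist w Z (vs ! m') (vs ! Suc m') = ereal (real (walk_weight w W'))"
      by (rule gdist_attained[OF reachable_tree])
    have "ell w Z vs (Suc m') = ell w Z vs m' + real (walk_weight w W')"
      using W'(4) by (simp add: ell_def)
    moreover have glue: "last W = hd W'" using W(3) W'(2) by simp
    moreover have "W \<noteq> []" "W' \<noteq> []" using W(1) W'(1) by auto
    ultimately show ?thesis
      using Suc.prems(1)[OF walk_append[OF W(1) W'(1) glue]] W W'(3)
        last_append_tl[OF _ glue] walk_weight_append[OF _ _ glue, of w]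
      by simp
  qed
qed

lemma tour_walk_abs:
  assumes vs: "set vs \<subseteq> V" and m: "m < length vs" "m' < length vs"
  obtains W where "walk Z W" "hd W = vs ! m" "last W = vs ! m'"
    "real (walk_weight w W) = \<bar>ell w Z vs m' - ell w Z vs m\<bar>"
proof (cases "m \<le> m'")
  case True
  obtain W where "walk Z W" "hd W = vs ! m" "last W = vs ! m'"
    "real (walk_weight w W) = ell w Z vs m' - ell w Z vs m"
    by (rule tour_walk[OF vs True m(2)])
  moreover have "ell w Z vs m' - ell w Z vs m \<ge> 0" using calculation(4) by (metis of_nat_0_le_iff)
  ultimately show ?thesis using that by simp
next
  case False
  have "m' \<le> m" using False by simp
  then obtain W where W: "walk Z W" "hd W = vs ! m'" "last W = vs ! m"
    "real (walk_weight w W) = ell w Z vs m - ell w Z vs m'"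
    by (rule tour_walk[OF vs _ m(1)])
  then show ?thesis
    using that[OF walk_rev(1)[OF W(1)]] walk_rev(2)[OF W(1)]
    by (simp add: hd_rev last_rev abs_minus_commute abs_of_nonneg[of "ell w Z vs m - ell w Z vs m'"])
qed

end

section \<open>The greedy spanner\<close>

definition greedy_prefix :: "('v set \<Rightarrow> nat) \<Rightarrow> real \<Rightarrow> 'v set list \<Rightarrow> nat \<Rightarrow> 'v set set" where
  "greedy_prefix w t es m = foldl (greedy_step w t) {} (take m es)"

lemma greedy_step_bounds: "H \<subseteq> greedy_step w t H e" "greedy_step w t H e \<subseteq> insert e H"
  unfolding greedy_step_def by auto

lemma foldl_greedy_step_bounds:
  "H \<subseteq> foldl (greedy_step w t) H xs" "foldl (greedy_step w t) H xs \<subseteq> H \<union> set xs"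
proof (induction xs arbitrary: H)
  case (Cons x xs)
  case 1 show ?case using subset_trans[OF greedy_step_bounds(1) Cons.IH(1)] by simp
  case 2 show ?case using Cons.IH(2) greedy_step_bounds(2) by fastforce
qed simp_all

lemma greedy_prefix_Suc:
  "m < length es \<Longrightarrow> greedy_prefix w t es (Suc m) = greedy_step w t (greedy_prefix w t es m) (es ! m)"
  unfolding greedy_prefix_def by (simp add: take_Suc_conv_app_nth)

lemma greedy_prefix_subset: "greedy_prefix w t es m \<subseteq> set (take m es)"
  using foldl_greedy_step_bounds(2)[of w t "{}"] unfolding greedy_prefix_def by blast

lemma greedy_prefix_mono:
  assumes "m \<le> m'"
  shows "greedy_prefix w t es m \<subseteq> greedy_prefix w t es m'"
proof -
  have "take m' es = take m es @ take (m' - m) (drop m es)"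
    using assms by (metis le_add_diff_inverse take_add)
  then show ?thesis
    unfolding greedy_prefix_def using foldl_greedy_step_bounds(1) by simp
qed

lemma greedy_spanner_subset_prefix: "greedy_spanner w t es \<subseteq> greedy_prefix w t es m \<union> set (drop m es)"
  using foldl_greedy_step_bounds(2)[of w t "greedy_prefix w t es m" "drop m es"]
  unfolding greedy_spanner_def greedy_prefix_def by (simp flip: foldl_append)

lemma greedy_spanner_subset_edges: "greedy_spanner w t es \<subseteq> set es"
  using foldl_greedy_step_bounds(2)[of w t "{}" es] unfolding greedy_spanner_def by simp

lemma greedy_spanner_edge_added:
  assumes "distinct es" "m < length es" "es ! m \<in> greedy_spanner w t es"
  shows "es ! m \<in> greedy_prefix w t es (Suc m)"
    "\<exists>u v. es ! m = {u, v} \<and> gdist w (greedy_prefix w t es m) u v > ereal (t * real (w (es ! m)))"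
proof -
  have "es ! m \<notin> set (drop (Suc m) es)" "es ! m \<notin> set (take m es)"
    using assms(1,2) by (simp_all add: in_set_conv_nth nth_eq_iff_index_eq)
  then have "es ! m \<in> greedy_prefix w t es (Suc m)" "es ! m \<notin> greedy_prefix w t es m"
    using assms(3) greedy_spanner_subset_prefix[of w t es "Suc m"] greedy_prefix_subset by blast+
  then show "es ! m \<in> greedy_prefix w t es (Suc m)"
    and "\<exists>u v. es ! m = {u, v} \<and> gdist w (greedy_prefix w t es m) u v > ereal (t * real (w (es ! m)))"
    using greedy_prefix_Suc[OF assms(2)] unfolding greedy_step_def by (auto split: if_splits)
qed

context mst_graph
begin

context
  fixes es :: "'v set list" and t :: real
  assumes es: "distinct es" "set es = E" "sorted_wrt (\<lambda>e f. w e \<le> w f) es"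
begin

lemma greedy_prefix_lighter:
  assumes i: "i < length es" and g: "g \<in> greedy_prefix w t es i"
  shows "g \<in> E - {es ! i}" "w g \<le> w (es ! i)"
proof -
  obtain k where k: "k < i" "es ! k = g"
    using greedy_prefix_subset g i by (fastforce simp: in_set_conv_nth)
  then show "g \<in> E - {es ! i}" using es(1,2) i by (auto simp: nth_eq_iff_index_eq)
  show "w g \<le> w (es ! i)" using sorted_wrt_nth_less[OF es(3) k(1) i] k(2) by simp
qed

lemma greedy_spanner_edge_index:
  assumes "e \<in> greedy_spanner w t es"
  obtains j where "j < length es" "es ! j = e"
  using assms greedy_spanner_subset_edges that by (fastforce simp: in_set_conv_nth)

text \<open>By the cut property every tree edge is taken when it is processed.\<close>

lemma lighter_tree_edge_in_greedy_prefix: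
  assumes j: "j < length es" and f: "f \<in> Z" "w f < w (es ! j)"
  shows "f \<in> greedy_prefix w t es j"
proof -
  have "f \<in> set es" using f(1) tree_subset es(2) by blast
  then obtain i where i: "i < length es" "es ! i = f" by (auto simp: in_set_conv_nth)
  have "i \<noteq> j" using f(2) i(2) by auto
  moreover have "\<not> j < i" using sorted_wrt_nth_less[OF es(3), of j i] i f(2) by auto
  ultimately have "i < j" by simp
  obtain p q where "f = {p, q}" using edge_endpoints f(1) tree_subset by blast
  moreover have "greedy_prefix w t es i \<subseteq> E - {f}"
    using greedy_prefix_lighter(1)[OF i(1)] i(2) by blast
  moreover have "w g \<le> w f" if "g \<in> greedy_prefix w t es i" for g
    using greedy_prefix_lighter(2)[OF i(1) that] i(2) by simp
  ultimately have "\<not> reachable (greedy_prefix w t es i) p q"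
    using mst_cut_property[OF f(1)] by blast
  then have "gdist w (greedy_prefix w t es i) p q > ereal (t * real (w f))"
    by (simp add: gdist_unreachable)
  then have "f \<in> greedy_prefix w t es (Suc i)"
    using greedy_prefix_Suc[OF i(1)] i(2) \<open>f = {p, q}\<close> unfolding greedy_step_def by auto
  then show ?thesis using greedy_prefix_mono[of "Suc i" j] \<open>i < j\<close> by auto
qed

text \<open>Routed through lighter tree edges, which are already present, and possibly through the
  earlier edge \<open>e'\<close>, the endpoints of \<open>e\<close> were within stretch \<open>t\<close> when \<open>e\<close> was processed.\<close>

lemma greedy_spanner_edge_not_close:
  assumes t: "1 + \<epsilon> \<le> t"
    and e: "e \<in> greedy_spanner w t es" "e \<notin> Z" and e': "e' \<in> greedy_spanner w t es" "e' \<notin> Z"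
    and idx: "j < length es" "j' < j" "es ! j = e" "es ! j' = e'"
    and uv: "e = {u, v}" "e' = {u', v'}"
    and W1: "walk Z W1" "hd W1 = u" "last W1 = u'" and W2: "walk Z W2" "hd W2 = v'" "last W2 = v"
    and close: "real (walk_weight w W1) + real (walk_weight w W2) < \<epsilon> * real (w e)"
  shows False
proof -
  define H where "H = greedy_prefix w t es j"
  obtain u0 v0 where uv0: "e = {u0, v0}" "gdist w H u0 v0 > ereal (t * real (w e))"
    using greedy_spanner_edge_added(2)[OF es(1) idx(1)] idx(3) e(1) unfolding H_def by blast
  then have "(u0 = u \<and> v0 = v) \<or> (u0 = v \<and> v0 = u)" using uv(1) by (auto simp: doubleton_eq_iff)
  then have far: "gdist w H u v > ereal (t * real (w e))"
    using uv0(2) by (elim disjE) (simp_all add: gdist_commute[of w H v u])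
  have "e' \<in> H"
    using greedy_spanner_edge_added(1)[OF es(1) _ e'(1)[folded idx(4)]] idx
      greedy_prefix_mono[of "Suc j'" j] unfolding H_def by auto
  have "w e' \<le> w e" using sorted_wrt_nth_less[OF es(3) idx(2,1)] idx(3,4) by simp
  define R where "R = {f \<in> Z. w f < w e}"
  have "R \<subseteq> Z" "R \<subseteq> H"
    using lighter_tree_edge_in_greedy_prefix[OF idx(1)] idx(3) unfolding R_def H_def by auto
  have "e \<in> E" "e' \<in> E" using e(1) e'(1) greedy_spanner_subset_edges es(2) by blast+
  have uv_R: "reachable R u v" unfolding R_def using mst_cycle_property[OF \<open>e \<in> E\<close> e(2) uv(1)] .
  have "{f \<in> Z. w f < w e'} \<subseteq> R" using \<open>w e' \<le> w e\<close> unfolding R_def by auto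
  then have uv_R': "reachable R u' v'"
    by (rule reachable_mono[OF mst_cycle_property[OF \<open>e' \<in> E\<close> e'(2) uv(2)]])
  have "{u', v'} \<in> H" using \<open>e' \<in> H\<close> uv(2) by simp
  obtain P where P: "walk H P" "hd P = u" "last P = v"
    "walk_weight w P \<le> walk_weight w W1 + walk_weight w W2 + w {u', v'}"
    by (rule subforest_detour[OF \<open>R \<subseteq> Z\<close> \<open>R \<subseteq> H\<close> \<open>{u', v'} \<in> H\<close> uv_R uv_R' W1 W2])
  have "real (walk_weight w P) \<le> real (walk_weight w W1) + real (walk_weight w W2) + real (w e)"
    using P(4) \<open>w e' \<le> w e\<close> uv(2) by simp
  also have "\<dots> < (1 + \<epsilon>) * real (w e)" using close by (simp add: algebra_simps)
  also have "\<dots> \<le> t * real (w e)" using t by (intro mult_right_mono) auto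
  finally have "real (walk_weight w P) < t * real (w e)" .
  moreover have "gdist w H u v \<le> ereal (real (walk_weight w P))"
    using gdist_le_walk_weight[OF P(1), of w] P(2,3) by simp
  then have "t * real (w e) < real (walk_weight w P)" using far less_le_trans by fastforce
  ultimately show False by simp
qed

lemma greedy_spanner_edges_far_apart:
  assumes t: "1 + \<epsilon> \<le> t" and vs: "set vs \<subseteq> V"
    and e: "e \<in> greedy_spanner w t es" "e \<notin> Z" and e': "e' \<in> greedy_spanner w t es" "e' \<notin> Z"
    and "e \<noteq> e'" and m: "m1 < length vs" "m2 < length vs" "m1' < length vs" "m2' < length vs"
    and ends: "e = {vs ! m1, vs ! m2}" "e' = {vs ! m1', vs ! m2'}"
    and close: "\<bar>ell w Z vs m1 - ell w Z vs m1'\<bar> + \<bar>ell w Z vs m2 - ell w Z vs m2'\<bar>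
      < \<epsilon> * max (real (w e)) (real (w e'))"
  shows False
proof -
  obtain j where j: "j < length es" "es ! j = e" using greedy_spanner_edge_index[OF e(1)] .
  obtain j' where j': "j' < length es" "es ! j' = e'" using greedy_spanner_edge_index[OF e'(1)] .
  have "j \<noteq> j'" using j j' \<open>e \<noteq> e'\<close> by auto
  then consider "j' < j" | "j < j'" by linarith
  then show False
  proof cases
    case 1
    then have "w e' \<le> w e" using sorted_wrt_nth_less[OF es(3) 1 j(1)] j(2) j'(2) by simp
    obtain W1 where W1: "walk Z W1" "hd W1 = vs ! m1" "last W1 = vs ! m1'"
      "real (walk_weight w W1) = \<bar>ell w Z vs m1' - ell w Z vs m1\<bar>"
      by (rule tour_walk_abs[OF vs m(1,3)])
    obtain W2 where W2: "walk Z W2" "hd W2 = vs ! m2'" "last W2 = vs ! m2"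
      "real (walk_weight w W2) = \<bar>ell w Z vs m2 - ell w Z vs m2'\<bar>"
      by (rule tour_walk_abs[OF vs m(4,2)])
    have "real (walk_weight w W1) + real (walk_weight w W2) < \<epsilon> * real (w e)"
      using W1(4) W2(4) close \<open>w e' \<le> w e\<close> by (simp add: abs_minus_commute max_absorb1)
    then show False
      by (rule greedy_spanner_edge_not_close[OF t e e' j(1) 1 j(2) j'(2) ends W1(1-3) W2(1-3)])
  next
    case 2
    then have "w e \<le> w e'" using sorted_wrt_nth_less[OF es(3) 2 j'(1)] j(2) j'(2) by simp
    obtain W1 where W1: "walk Z W1" "hd W1 = vs ! m1'" "last W1 = vs ! m1"
      "real (walk_weight w W1) = \<bar>ell w Z vs m1 - ell w Z vs m1'\<bar>"
      by (rule tour_walk_abs[OF vs m(3,1)])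
    obtain W2 where W2: "walk Z W2" "hd W2 = vs ! m2" "last W2 = vs ! m2'"
      "real (walk_weight w W2) = \<bar>ell w Z vs m2' - ell w Z vs m2\<bar>"
      by (rule tour_walk_abs[OF vs m(2,4)])
    have "real (walk_weight w W1) + real (walk_weight w W2) < \<epsilon> * real (w e')"
      using W1(4) W2(4) close \<open>w e \<le> w e'\<close> by (simp add: abs_minus_commute max_absorb2)
    then show False
      by (rule greedy_spanner_edge_not_close[OF t e' e j'(1) 2 j'(2) j(2) ends(2,1) W1(1-3) W2(1-3)])
  qed
qed

end

end

section \<open>Intervals and representatives\<close>

lemma interval_vertex_near_representative:
  assumes x: "vertex_in_interval w Z vs s x h" "1 \<le> h" and q: "q \<in> Nb s r b h"
    and r: "\<forall>j\<in>{1..s}. real (j - 1) * L / real s < real (r j) \<and> real (r j) < real j * L / real s"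
    and L: "L = tour_length w Z vs" and c: "c = L / real s" "0 \<le> c"
  obtains m where "m < length vs" "vs ! m = x" "\<bar>ell w Z vs m - real q\<bar> < (real b + 1) * c"
proof -
  obtain m where m: "m < length vs" "vs ! m = x"
      "real (h - 1) * c \<le> ell w Z vs m" "ell w Z vs m \<le> real h * c"
    using x(1) unfolding vertex_in_interval_def L[symmetric] c(1) by auto
  obtain h' where h': "q = r h'" "1 \<le> h'" "h' \<le> s" "\<bar>int h - int h'\<bar> \<le> int b"
    using q unfolding Nb_def by blast
  have "real (h' - 1) * c < real q" "real q < real h' * c"
    using r h' unfolding c(1) by auto
  moreover have "real h * c \<le> (real h' + real b) * c" "real h' * c \<le> (real h + real b) * c"
    using h'(4) by (intro mult_right_mono c(2); linarith)+
  moreover have "real (h - 1) = real h - 1" "real (h' - 1) = real h' - 1"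
    using x(2) h'(2) by (simp_all add: of_nat_diff)
  ultimately have "\<bar>ell w Z vs m - real q\<bar> < (real b + 1) * c"
    using m(3,4) by (simp add: algebra_simps abs_less_iff)
  with m(1,2) show ?thesis by (rule that)
qed

lemma maximal_matching_edge:
  assumes "maximal_matching_between A B M" "X \<in> M"
  obtains p p' where "p \<in> A" "p' \<in> B" "X = {p, p'}"
proof -
  have "X \<in> {{q, q'} |q q'. q \<in> A \<and> q' \<in> B \<and> q \<noteq> q'}"
    using assms unfolding maximal_matching_between_def by blast
  then show ?thesis using that by blast
qed

lemma Nb_radius_lt:
  fixes a \<epsilon> x :: real
  assumes "0 < a" "0 < \<epsilon>" "a < x"
  shows "(real (nat \<lfloor>x / a\<rfloor>) + 1) * (\<epsilon> * a / 8) < \<epsilon> * x / 4"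
proof -
  have "real (nat \<lfloor>x / a\<rfloor>) \<le> x / a" using assms by (intro of_nat_floor) simp
  then have "(real (nat \<lfloor>x / a\<rfloor>) + 1) * (\<epsilon> * a / 8) \<le> (x / a + 1) * (\<epsilon> * a / 8)"
    using assms by (intro mult_right_mono) auto
  also have "\<dots> = \<epsilon> * (x + a) / 8" using assms by (simp add: field_simps)
  also have "\<dots> < \<epsilon> * x / 4" using assms by (simp add: field_simps)
  finally show ?thesis .
qed

lemma matching_edge_source_near:
  assumes M: "maximal_matching_between (Nb s r (nat \<lfloor>x / a\<rfloor>) h) (Nb s r (nat \<lfloor>x / a\<rfloor>) j) M"
    and X: "{q, q'} \<in> M" and e: "e = {u, v}"
    and uv: "vertex_in_interval w Z vs s u h" "vertex_in_interval w Z vs s v j" "1 \<le> h" "1 \<le> j"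
    and r: "\<forall>j\<in>{1..s}. real (j - 1) * L / real s < real (r j) \<and> real (r j) < real j * L / real s"
    and L: "L = tour_length w Z vs" "L / real s = \<epsilon> * a / 8"
    and pos: "0 < a" "0 < \<epsilon>" "a < x"
  obtains m m' where "m < length vs" "m' < length vs" "e = {vs ! m, vs ! m'}"
    "\<bar>ell w Z vs m - real q\<bar> < \<epsilon> * x / 4" "\<bar>ell w Z vs m' - real q'\<bar> < \<epsilon> * x / 4"
proof -
  define c where "c = L / real s"
  have c_eq: "c = \<epsilon> * a / 8" using L(2) unfolding c_def .
  have c: "0 \<le> c" "(real (nat \<lfloor>x / a\<rfloor>) + 1) * c < \<epsilon> * x / 4"
    unfolding c_eq using Nb_radius_lt[OF pos] pos(1,2) by simp_all
  obtain p p' where p: "p \<in> Nb s r (nat \<lfloor>x / a\<rfloor>) h" "p' \<in> Nb s r (nat \<lfloor>x / a\<rfloor>) j"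
    "{q, q'} = {p, p'}"
    by (rule maximal_matching_edge[OF M X])
  obtain mu where mu: "mu < length vs" "vs ! mu = u"
    "\<bar>ell w Z vs mu - real p\<bar> < (real (nat \<lfloor>x / a\<rfloor>) + 1) * c"
    by (rule interval_vertex_near_representative[OF uv(1,3) p(1) r L(1) c_def c(1)])
  obtain mv where mv: "mv < length vs" "vs ! mv = v"
    "\<bar>ell w Z vs mv - real p'\<bar> < (real (nat \<lfloor>x / a\<rfloor>) + 1) * c"
    by (rule interval_vertex_near_representative[OF uv(2,4) p(2) r L(1) c_def c(1)])
  note mu = mu(1,2) less_trans[OF mu(3) c(2)] and mv = mv(1,2) less_trans[OF mv(3) c(2)]
  from p(3) consider "q = p" "q' = p'" | "q = p'" "q' = p" by (auto simp: doubleton_eq_iff)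
  then show ?thesis
  proof cases
    case 1
    then show ?thesis using that[of mu mv] mu mv e by simp
  next
    case 2
    then show ?thesis using that[of mv mu] mu mv e by (simp add: insert_commute)
  qed
qed

lemma interval_length:
  fixes a L \<epsilon> x :: real
  assumes "a < x" "x \<le> real k * a" "1 \<le> k" "a = real k ^ j * L / real n"
    and "real s = 8 * L / (\<epsilon> * a)" "0 < \<epsilon>"
  shows "0 < a" "L / real s = \<epsilon> * a / 8"
proof -
  show "0 < a"
  proof (rule ccontr)
    assume "\<not> 0 < a"
    then have "real k * a \<le> 1 * a" using assms(3) by (intro mult_right_mono_neg) auto
    then show False using assms(1,2) by simp
  qed
  moreover have "0 < L"
  proof (rule ccontr)
    assume "\<not> 0 < L"
    then have "real k ^ j * L \<le> 0" by (simp add: mult_nonneg_nonpos)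
    then have "real k ^ j * L / real n \<le> 0" by (simp add: divide_nonpos_nonneg)
    then show False using \<open>0 < a\<close> assms(4) by simp
  qed
  ultimately show "L / real s = \<epsilon> * a / 8" using assms(5,6) by simp
qed

theorem proposition2:
  fixes V :: "'v set" and E :: "'v set set" and w :: "'v set \<Rightarrow> nat" and Z :: "'v set set"
    and k :: nat and \<epsilon> :: real and es :: "'v set list" and vs :: "'v list"
    and i :: nat and s :: nat and r :: "nat \<Rightarrow> nat"
    and src :: "'v set \<Rightarrow> 'v \<times> 'v" and hI jI :: "'v set \<Rightarrow> nat"
    and M :: "'v set \<Rightarrow> nat set set"
  assumes fin: "finite V" and simple: "simple_graph V E"
    and wpos: "\<forall>e\<in>E. w e > 0"
    and conn: "connected_on V E"
    and mst: "unique_MST V E w Z"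
    and k2: "k \<ge> 2" and eps: "\<epsilon> > 0"
    and es: "distinct es" "set es = E" "sorted_wrt (\<lambda>e f. w e \<le> w f) es"
    and pre: "is_preorder V Z vs"
    and i: "1 \<le> i" "real i \<le> of_int \<lceil>log (real k) (real (card V))\<rceil>"
  defines "L \<equiv> tour_length w Z vs"
    and "a \<equiv> real k ^ (i - 1) * tour_length w Z vs / real (card V)"
    and "Ei \<equiv> {e \<in> greedy_spanner w ((2 * real k - 1) * (1 + \<epsilon>)) es - Z.
                 real k ^ (i - 1) * tour_length w Z vs / real (card V) < real (w e) \<and>
                 real (w e) \<le> real k * (real k ^ (i - 1) * tour_length w Z vs / real (card V))}"
  assumes s: "real s = 8 * L / (\<epsilon> * a)" and Ls: "\<exists>m::nat. real m = L / real s"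
    and r: "\<forall>j\<in>{1..s}. real (j - 1) * L / real s < real (r j) \<and> real (r j) < real j * L / real s"
    and K: "\<forall>e\<in>Ei. e = {fst (src e), snd (src e)} \<and> hI e \<in> {1..s} \<and> jI e \<in> {1..s}
              \<and> vertex_in_interval w Z vs s (fst (src e)) (hI e)
              \<and> vertex_in_interval w Z vs s (snd (src e)) (jI e)
              \<and> maximal_matching_between
                  (Nb s r (nat \<lfloor>real (w e) / a\<rfloor>) (hI e))
                  (Nb s r (nat \<lfloor>real (w e) / a\<rfloor>) (jI e)) (M e)"
  shows "\<forall>e\<in>Ei. \<forall>e'\<in>Ei. e \<noteq> e' \<longrightarrow> M e \<inter> M e' = {}"
proof (intro ballI impI equals0I)
  interpret mst_graph V E w Z using fin simple mst by unfold_locales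
  define t where "t = (2 * real k - 1) * (1 + \<epsilon>)"
  have t: "1 + \<epsilon> \<le> t" using k2 eps unfolding t_def by (simp add: mult_le_cancel_right1)
  have vs: "set vs \<subseteq> V" using pre unfolding is_preorder_def by simp
  fix e e' X assume ee: "e \<in> Ei" "e' \<in> Ei" "e \<noteq> e'" and X: "X \<in> M e \<inter> M e'"
  have Ei: "f \<in> greedy_spanner w t es" "f \<notin> Z" "a < real (w f)" "real (w f) \<le> real k * a"
    "f = {fst (src f), snd (src f)}" "1 \<le> hI f" "1 \<le> jI f"
    "vertex_in_interval w Z vs s (fst (src f)) (hI f)" "vertex_in_interval w Z vs s (snd (src f)) (jI f)"
    "maximal_matching_between (Nb s r (nat \<lfloor>real (w f) / a\<rfloor>) (hI f))
       (Nb s r (nat \<lfloor>real (w f) / a\<rfloor>) (jI f)) (M f)"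
    if "f \<in> Ei" for f
    using that K unfolding Ei_def a_def t_def by auto
  have "a = real k ^ (i - 1) * L / real (card V)" unfolding a_def L_def ..
  then have scale: "0 < a" "L / real s = \<epsilon> * a / 8"
    using interval_length[OF Ei(3,4)[OF ee(1)] _ _ s eps] k2 by auto
  obtain q q' where "X = {q, q'}" using maximal_matching_edge[OF Ei(10)[OF ee(1)]] X by blast
  then have "{q, q'} \<in> M e" "{q, q'} \<in> M e'" using X by auto
  obtain m1 m2 where m: "m1 < length vs" "m2 < length vs" "e = {vs ! m1, vs ! m2}"
      "\<bar>ell w Z vs m1 - real q\<bar> < \<epsilon> * real (w e) / 4" "\<bar>ell w Z vs m2 - real q'\<bar> < \<epsilon> * real (w e) / 4"
    by (rule matching_edge_source_near[OF Ei(10)[OF ee(1)] \<open>{q, q'} \<in> M e\<close> Ei(5,8,9,6,7)[OF ee(1)]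
          r meta_eq_to_obj_eq[OF L_def] scale(2,1) eps Ei(3)[OF ee(1)]])
  obtain m1' m2' where m': "m1' < length vs" "m2' < length vs" "e' = {vs ! m1', vs ! m2'}"
      "\<bar>ell w Z vs m1' - real q\<bar> < \<epsilon> * real (w e') / 4" "\<bar>ell w Z vs m2' - real q'\<bar> < \<epsilon> * real (w e') / 4"
    by (rule matching_edge_source_near[OF Ei(10)[OF ee(2)] \<open>{q, q'} \<in> M e'\<close> Ei(5,8,9,6,7)[OF ee(2)]
          r meta_eq_to_obj_eq[OF L_def] scale(2,1) eps Ei(3)[OF ee(2)]])
  have "\<epsilon> * real (w e) + \<epsilon> * real (w e') \<le> 2 * (\<epsilon> * max (real (w e)) (real (w e')))"
    using eps by (simp add: max_def)
  then have "\<bar>ell w Z vs m1 - ell w Z vs m1'\<bar> + \<bar>ell w Z vs m2 - ell w Z vs m2'\<bar>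
      < \<epsilon> * max (real (w e)) (real (w e'))"
    using m(4,5) m'(4,5) by linarith
  then show False
    using greedy_spanner_edges_far_apart[OF es t vs Ei(1,2)[OF ee(1)] Ei(1,2)[OF ee(2)] ee(3)
        m(1,2) m'(1,2) m(3) m'(3)] by simp
qed

end
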